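(* Let $\mathcal O_q$ be the algebra defined in the context, with the degrees and subspaces $\mathcal O_d$ defined there. Then (i) the subspace $\mathcal O_1$ has basis $1,\mathcal W_0,\mathcal W_1$; (ii) for $d\ge2$, $$\mathcal O_d=E_d+\mathcal O_{d-1}+\sum_{k=1}^{d-1}\mathrm{Span}(\mathcal O_k\mathcal O_{d-k}),$$ where $E_d=0$ if $d$ is odd and $E_d=\mathbb F\tilde{\mathcal G}_n$ if $d=2n$ is even.
   Context: All algebras are associative and unital over a field $\mathbb F$; $q\in\mathbb F$ is nonzero and not a root of unity. For elements $X,Y$ of an algebra, $[X,Y]=XY-YX$ and $[X,Y]_q=qXY-q^{-1}YX$. Let $\rho=-(q^2-q^{-2})^2$. The algebra $\mathcal O_q$ is defined by generators (called alternating generators) $\mathcal W_{-k},\mathcal W_{k+1},\mathcal G_{k+1},\tilde{\mathcal G}_{k+1}$ ($k\in\mathbb N$) and the following relations for all $k,\ell\in\mathbb N$: $[\mathcal W_0,\mathcal W_{k+1}]=[\mathcal W_{-k},\mathcal W_1]=(\tilde{\mathcal G}_{k+1}-\mathcal G_{k+1})/(q+q^{-1})$; $[\mathcal W_0,\mathcal G_{k+1}]_q=[\tilde{\mathcal G}_{k+1},\mathcal W_0]_q=\rho\mathcal W_{-k-1}-\rho\mathcal W_{k+1}$; $[\mathcal G_{k+1},\mathcal W_1]_q=[\mathcal W_1,\tilde{\mathcal G}_{k+1}]_q=\rho\mathcal W_{k+2}-\rho\mathcal W_{-k}$; $[\mathcal W_{-k},\mathcal W_{-\ell}]=0$, $[\mathcal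 W_{k+1},\mathcal W_{\ell+1}]=0$; $[\mathcal W_{-k},\mathcal W_{\ell+1}]+[\mathcal W_{k+1},\mathcal W_{-\ell}]=0$; $[\mathcal W_{-k},\mathcal G_{\ell+1}]+[\mathcal G_{k+1},\mathcal W_{-\ell}]=0$; $[\mathcal W_{-k},\tilde{\mathcal G}_{\ell+1}]+[\tilde{\mathcal G}_{k+1},\mathcal W_{-\ell}]=0$; $[\mathcal W_{k+1},\mathcal G_{\ell+1}]+[\mathcal G_{k+1},\mathcal W_{\ell+1}]=0$; $[\mathcal W_{k+1},\tilde{\mathcal G}_{\ell+1}]+[\tilde{\mathcal G}_{k+1},\mathcal W_{\ell+1}]=0$; $[\mathcal G_{k+1},\mathcal G_{\ell+1}]=0$, $[\tilde{\mathcal G}_{k+1},\tilde{\mathcal G}_{\ell+1}]=0$; $[\tilde{\mathcal G}_{k+1},\mathcal G_{\ell+1}]+[\mathcal G_{k+1},\tilde{\mathcal G}_{\ell+1}]=0$. Assign degrees: $\deg\mathcal G_{k+1}=\deg\tilde{\mathcal G}_{k+1}=2k+2$ and $\deg\mathcal W_{-k}=\deg\mathcal W_{k+1}=2k+1$ for $k\in\mathbb N$. For $d\in\mathbb N$, $\mathcal O_d$ is the subspace of $\mathcal O_q$ spanned by all products $a_1a_2\cdots a_n$ ($n\in\mathbb N$, the empty product being $1$) of alternating generators with $\sum_{i=1}^n\deg(a_i)\le d$. *)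

theory Defs
  imports Main
begin

text \<open>Alternating generators of O_q:
  Wm k = W_{-k}, Wp k = W_{k+1}, G k = G_{k+1}, Gt k = tilde G_{k+1}  (k :: nat).\<close>
datatype gen = Wm nat | Wp nat | G nat | Gt nat

fun gdeg :: "gen \<Rightarrow> nat" where
  "gdeg (Wm k) = 2 * k + 1"
| "gdeg (Wp k) = 2 * k + 1"
| "gdeg (G k) = 2 * k + 2"
| "gdeg (Gt k) = 2 * k + 2"

definition word_deg :: "gen list \<Rightarrow> nat" where
  "word_deg w = sum_list (map gdeg w)"

text \<open>Free associative unital algebra F<gen>: elements are (finitely supported)
  functions from words to the field; multiplication is concatenation convolution.\<close>
type_synonym 'k fa = "gen list \<Rightarrow> 'k"

definition wd :: "gen list \<Rightarrow> 'k::field fa" where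
  "wd w = (\<lambda>u. if u = w then 1 else 0)"

definition fa_zero :: "'k::field fa" where "fa_zero = (\<lambda>_. 0)"
definition fa_one :: "'k::field fa" where "fa_one = wd []"
definition fa_add :: "'k::field fa \<Rightarrow> 'k fa \<Rightarrow> 'k fa" where
  "fa_add f g = (\<lambda>w. f w + g w)"
definition fa_sub :: "'k::field fa \<Rightarrow> 'k fa \<Rightarrow> 'k fa" where
  "fa_sub f g = (\<lambda>w. f w - g w)"
definition fa_scale :: "'k::field \<Rightarrow> 'k fa \<Rightarrow> 'k fa" where
  "fa_scale c f = (\<lambda>w. c * f w)"
definition fa_mul :: "'k::field fa \<Rightarrow> 'k fa \<Rightarrow> 'k fa" where
  "fa_mul f g = (\<lambda>w. \<Sum>i\<le>length w. f (take i w) * g (drop i w))"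

definition gel :: "gen \<Rightarrow> 'k::field fa" where
  "gel x = wd [x]"

definition wprod :: "gen list \<Rightarrow> 'k::field fa" where
  "wprod w = foldr (\<lambda>x acc. fa_mul (gel x) acc) w fa_one"

inductive_set fspan :: "'k::field fa set \<Rightarrow> 'k fa set" for S where
  zero: "fa_zero \<in> fspan S"
| step: "x \<in> S \<Longrightarrow> y \<in> fspan S \<Longrightarrow> fa_add (fa_scale c x) y \<in> fspan S"

definition comm :: "'k::field fa \<Rightarrow> 'k fa \<Rightarrow> 'k fa" where
  "comm X Y = fa_sub (fa_mul X Y) (fa_mul Y X)"

definition qcomm :: "'k::field \<Rightarrow> 'k fa \<Rightarrow> 'k fa \<Rightarrow> 'k fa" where
  "qcomm q X Y = fa_sub (fa_scale q (fa_mul X Y)) (fa_scale (inverse q) (fa_mul Y X))"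

definition rho :: "'k::field \<Rightarrow> 'k" where
  "rho q = - ((q\<^sup>2 - inverse (q\<^sup>2))\<^sup>2)"

definition rels :: "'k::field \<Rightarrow> 'k fa set" where
  "rels q = (\<Union>k. \<Union>l.
    { fa_sub (comm (gel (Wm 0)) (gel (Wp k)))
             (fa_scale (inverse (q + inverse q)) (fa_sub (gel (Gt k)) (gel (G k)))),
      fa_sub (comm (gel (Wm k)) (gel (Wp 0)))
             (fa_scale (inverse (q + inverse q)) (fa_sub (gel (Gt k)) (gel (G k)))),
      fa_sub (qcomm q (gel (Wm 0)) (gel (G k)))
             (fa_sub (fa_scale (rho q) (gel (Wm (Suc k)))) (fa_scale (rho q) (gel (Wp k)))),
      fa_sub (qcomm q (gel (Gt k)) (gel (Wm 0)))
             (fa_sub (fa_scale (rho q) (gel (Wm (Suc k)))) (fa_scale (rho q) (gel (Wp k)))),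
      fa_sub (qcomm q (gel (G k)) (gel (Wp 0)))
             (fa_sub (fa_scale (rho q) (gel (Wp (Suc k)))) (fa_scale (rho q) (gel (Wm k)))),
      fa_sub (qcomm q (gel (Wp 0)) (gel (Gt k)))
             (fa_sub (fa_scale (rho q) (gel (Wp (Suc k)))) (fa_scale (rho q) (gel (Wm k)))),
      comm (gel (Wm k)) (gel (Wm l)),
      comm (gel (Wp k)) (gel (Wp l)),
      fa_add (comm (gel (Wm k)) (gel (Wp l))) (comm (gel (Wp k)) (gel (Wm l))),
      fa_add (comm (gel (Wm k)) (gel (G l))) (comm (gel (G k)) (gel (Wm l))),
      fa_add (comm (gel (Wm k)) (gel (Gt l))) (comm (gel (Gt k)) (gel (Wm l))),
      fa_add (comm (gel (Wp k)) (gel (G l))) (comm (gel (G k)) (gel (Wp l))),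
      fa_add (comm (gel (Wp k)) (gel (Gt l))) (comm (gel (Gt k)) (gel (Wp l))),
      comm (gel (G k)) (gel (G l)),
      comm (gel (Gt k)) (gel (Gt l)),
      fa_add (comm (gel (Gt k)) (gel (G l))) (comm (gel (G k)) (gel (Gt l))) })"

text \<open>Two-sided ideal of F<gen> generated by the relations; O_q = F<gen> / I.\<close>
definition Oideal :: "'k::field \<Rightarrow> 'k fa set" where
  "Oideal q = fspan {fa_mul (fa_mul (wprod u) r) (wprod v) | u r v. r \<in> rels q}"

text \<open>Preimage in F<gen> of the image of a set S under the quotient map
  F<gen> \<rightarrow> O_q. Subspaces of O_q correspond to these; two subsets of F<gen>
  have equal images in O_q iff their modI sets are equal.\<close>
definition modI :: "'k::field \<Rightarrow> 'k fa set \<Rightarrow> 'k fa set" where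
  "modI q S = {x. \<exists>s\<in>S. fa_sub x s \<in> Oideal q}"

text \<open>Lift of O_d: span of products of alternating generators of total degree \<le> d.\<close>
definition Od :: "nat \<Rightarrow> 'k::field fa set" where
  "Od d = fspan {wprod w | w. word_deg w \<le> d}"

definition Ed_gens :: "nat \<Rightarrow> 'k::field fa set" where
  "Ed_gens d = (if even d then {gel (Gt (d div 2 - 1))} else {})"

text \<open>Lift of Span(O_k O_{d-k}) for 1 \<le> k \<le> d-1, summed over k.\<close>
definition prod_gens :: "nat \<Rightarrow> 'k::field fa set" where
  "prod_gens d = {fa_mul a b | k a b. 1 \<le> k \<and> k \<le> d - 1 \<and> a \<in> Od k \<and> b \<in> Od (d - k)}"

end

theory Submission
  imports Defs
begin

text \<open>Part (i): the only words of degree at most 1 are \<open>1\<close>, \<open>W\<^sub>0\<close>, \<open>W\<^sub>1\<close>.  They remain independent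
  modulo the relations because for all \<open>a, b\<close> the algebra \<open>O\<^sub>q\<close> has a character sending \<open>W\<^sub>0\<close> to \<open>a\<close>
  and \<open>W\<^sub>1\<close> to \<open>b\<close>, so \<open>a' + b' W\<^sub>0 + c' W\<^sub>1 \<equiv> 0\<close> forces \<open>a' + b' a + c' b = 0\<close> identically.

  Part (ii): a word of degree less than \<open>d\<close> lies in \<open>O\<^sub>d\<^sub>-\<^sub>1\<close>, and a word of degree \<open>d\<close> with at
  least two letters is a product of elements of \<open>O\<^sub>k\<close> and \<open>O\<^sub>d\<^sub>-\<^sub>k\<close>.  The remaining words are single
  generators of degree \<open>d\<close>; apart from \<open>G\<^sup>~\<^sub>n\<close> (which is \<open>E\<^sub>d\<close>) the defining relations solve for them:
  \<open>G\<^sub>k\<^sub>+\<^sub>1 = G\<^sup>~\<^sub>k\<^sub>+\<^sub>1 - (q + q\<^sup>-\<^sup>1)[W\<^sub>0, W\<^sub>k\<^sub>+\<^sub>1]\<close>,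
  \<open>W\<^sub>-\<^sub>k\<^sub>-\<^sub>1 = W\<^sub>k\<^sub>+\<^sub>1 + \<rho>\<^sup>-\<^sup>1[W\<^sub>0, G\<^sub>k\<^sub>+\<^sub>1]\<^sub>q\<close> and \<open>W\<^sub>k\<^sub>+\<^sub>2 = W\<^sub>-\<^sub>k + \<rho>\<^sup>-\<^sup>1[G\<^sub>k\<^sub>+\<^sub>1, W\<^sub>1]\<^sub>q\<close>,
  each a lower-degree generator plus products of two generators.  This needs \<open>q + q\<^sup>-\<^sup>1 \<noteq> 0\<close> and
  \<open>\<rho> \<noteq> 0\<close>, i.e. only \<open>q\<^sup>4 \<noteq> 1\<close>.\<close>

lemma fa_mul_wd_left:
  "fa_mul (wd u) f w = (if take (length u) w = u then f (drop (length u) w) else (0::'k::field))"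
  (is "_ = ?rhs")
proof -
  have "fa_mul (wd u) f w
      = (\<Sum>i\<le>length w. if i = length u then (if take (length u) w = u then f (drop (length u) w) else 0) else 0)"
    unfolding fa_mul_def wd_def
  proof (rule sum.cong)
    show "(if take i w = u then 1 else 0) * f (drop i w) =
          (if i = length u then (if take (length u) w = u then f (drop (length u) w) else 0) else 0)"
      if "i \<in> {..length w}" for i
      using that by auto
  qed (rule refl)
  also have "\<dots> = ?rhs" by (auto simp: sum.delta)
  finally show ?thesis .
qed

lemma fa_mul_wd_right:
  "fa_mul f (wd v) w =
     (if drop (length w - length v) w = v then f (take (length w - length v) w) else (0::'k::field))"
  (is "_ = ?rhs")
proof -
  have "fa_mul f (wd v) w
      = (\<Sum>i\<le>length w. if i = length w - length v
           then (if drop (length w - length v) w = v then f (take (length w - length v) w) else 0) else 0)"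
    unfolding fa_mul_def wd_def
  proof (rule sum.cong)
    show "f (take i w) * (if drop i w = v then 1 else 0) =
          (if i = length w - length v
           then (if drop (length w - length v) w = v then f (take (length w - length v) w) else 0) else 0)"
      if "i \<in> {..length w}" for i
      using that by auto
  qed (rule refl)
  also have "\<dots> = ?rhs" by (auto simp: sum.delta)
  finally show ?thesis .
qed

lemma fa_mul_one_left [simp]: "fa_mul fa_one f = (f :: 'k::field fa)"
  by (rule ext) (simp add: fa_one_def fa_mul_wd_left)

lemma fa_mul_one_right [simp]: "fa_mul f fa_one = (f :: 'k::field fa)"
  by (rule ext) (simp add: fa_one_def fa_mul_wd_right)

lemma fa_mul_wd_wd: "fa_mul (wd u) (wd v) = (wd (u @ v) :: 'k::field fa)"
proof
  fix w
  show "fa_mul (wd u) (wd v) w = wd (u @ v) w"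
    unfolding fa_mul_wd_left by (simp add: wd_def) (metis append_eq_conv_conj)
qed

lemma wprod_eq_wd: "wprod w = (wd w :: 'k::field fa)"
  by (induction w) (simp_all add: wprod_def fa_one_def gel_def fa_mul_wd_wd)

lemma wprod_Nil [simp]: "wprod [] = (fa_one :: 'k::field fa)"
  by (simp add: wprod_def)

lemma wprod_Cons: "wprod (x # w) = fa_mul (gel x) (wprod w :: 'k::field fa)"
  by (simp add: wprod_def)

lemma wprod_singleton [simp]: "wprod [x] = (gel x :: 'k::field fa)"
  by (simp add: wprod_eq_wd gel_def)

lemma fa_mul_add_scale_left:
  "fa_mul (fa_add (fa_scale c x) y) z = fa_add (fa_scale c (fa_mul x z)) (fa_mul y (z::'k::field fa))"
  by (rule ext) (simp add: fa_mul_def fa_add_def fa_scale_def sum.distrib sum_distrib_left algebra_simps)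

lemma fa_mul_add_scale_right:
  "fa_mul z (fa_add (fa_scale c x) y) = fa_add (fa_scale c (fa_mul z x)) (fa_mul z (y::'k::field fa))"
  by (rule ext) (simp add: fa_mul_def fa_add_def fa_scale_def sum.distrib sum_distrib_left algebra_simps)

lemma fa_mul_zero_left [simp]: "fa_mul fa_zero z = (fa_zero::'k::field fa)"
  by (rule ext) (simp add: fa_mul_def fa_zero_def)

lemma fa_mul_zero_right [simp]: "fa_mul z fa_zero = (fa_zero::'k::field fa)"
  by (rule ext) (simp add: fa_mul_def fa_zero_def)

lemma fspan_superset: "x \<in> S \<Longrightarrow> x \<in> fspan S"
proof -
  assume "x \<in> S"
  then have "fa_add (fa_scale 1 x) fa_zero \<in> fspan S" by (intro fspan.step fspan.zero)
  moreover have "fa_add (fa_scale 1 x) fa_zero = x"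
    by (rule ext) (simp add: fa_add_def fa_scale_def fa_zero_def)
  ultimately show ?thesis by simp
qed

lemma fspan_add: "x \<in> fspan S \<Longrightarrow> y \<in> fspan S \<Longrightarrow> fa_add x y \<in> fspan S"
proof (induction x rule: fspan.induct)
  case zero
  have "fa_add fa_zero y = y" by (rule ext) (simp add: fa_add_def fa_zero_def)
  with zero show ?case by simp
next
  case (step x z c)
  have "fa_add (fa_add (fa_scale c x) z) y = fa_add (fa_scale c x) (fa_add z y)"
    by (rule ext) (simp add: fa_add_def add.assoc)
  with step show ?case by (simp add: fspan.step)
qed

lemma fspan_scale: "x \<in> fspan S \<Longrightarrow> fa_scale c x \<in> fspan S"
proof (induction x rule: fspan.induct)
  case zero
  have "fa_scale c fa_zero = fa_zero" by (rule ext) (simp add: fa_scale_def fa_zero_def)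
  then show ?case by (simp add: fspan.zero)
next
  case (step x z d)
  have "fa_scale c (fa_add (fa_scale d x) z) = fa_add (fa_scale (c * d) x) (fa_scale c z)"
    by (rule ext) (simp add: fa_add_def fa_scale_def algebra_simps)
  with step show ?case by (simp add: fspan.step)
qed

lemma fspan_sub: "x \<in> fspan S \<Longrightarrow> y \<in> fspan S \<Longrightarrow> fa_sub x y \<in> fspan S"
proof -
  assume "x \<in> fspan S" "y \<in> fspan S"
  moreover have "fa_sub x y = fa_add x (fa_scale (-1) y)"
    by (rule ext) (simp add: fa_add_def fa_sub_def fa_scale_def)
  ultimately show ?thesis by (simp add: fspan_add fspan_scale)
qed

lemma fspan_subset:
  assumes "S \<subseteq> fspan T"
  shows "fspan S \<subseteq> fspan T"
proof
  fix x assume "x \<in> fspan S"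
  then show "x \<in> fspan T"
    by induction (use assms in \<open>auto intro: fspan.zero fspan_add fspan_scale\<close>)
qed

lemma fa_mul_fspan:
  assumes "\<And>a b. a \<in> A \<Longrightarrow> b \<in> B \<Longrightarrow> fa_mul a b \<in> fspan C"
    and "x \<in> fspan A" and "y \<in> fspan B"
  shows "fa_mul x y \<in> fspan (C :: 'k::field fa set)"
proof -
  have right: "fa_mul a y \<in> fspan C" if "a \<in> A" for a
    using \<open>y \<in> fspan B\<close>
    by (induction y rule: fspan.induct)
       (auto simp: fa_mul_add_scale_right intro: fspan.zero fspan_add fspan_scale assms(1) that)
  from \<open>x \<in> fspan A\<close> show ?thesis
    by (induction x rule: fspan.induct)
       (auto simp: fa_mul_add_scale_left intro: fspan.zero fspan_add fspan_scale right)
qed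

definition fa_support :: "'k::field fa \<Rightarrow> gen list set" where
  "fa_support f = {w. f w \<noteq> 0}"

text \<open>The linear extension of the multiplicative map \<open>w \<mapsto> \<chi> w\<^sub>1 \<cdots> \<chi> w\<^sub>n\<close> on words; it is
  only meaningful for finitely supported \<open>f\<close> (an infinite support gives the junk sum 0).\<close>
definition fa_eval :: "(gen \<Rightarrow> 'k) \<Rightarrow> 'k fa \<Rightarrow> 'k::field" where
  "fa_eval \<chi> f = (\<Sum>w\<in>fa_support f. f w * prod_list (map \<chi> w))"

lemma fa_eval_eq_sum:
  "finite S \<Longrightarrow> fa_support f \<subseteq> S \<Longrightarrow> fa_eval \<chi> f = (\<Sum>w\<in>S. f w * prod_list (map \<chi> w))"
  unfolding fa_eval_def fa_support_def by (rule sum.mono_neutral_left) auto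

lemma finite_fa_support_zero [simp]: "finite (fa_support (fa_zero :: 'k::field fa))"
  by (simp add: fa_support_def fa_zero_def)

lemma finite_fa_support_wd [simp]: "finite (fa_support (wd u :: 'k::field fa))"
  unfolding fa_support_def wd_def by (rule finite_subset[of _ "{u}"]) auto

lemma finite_fa_support_add [simp]:
  "finite (fa_support f) \<Longrightarrow> finite (fa_support g) \<Longrightarrow> finite (fa_support (fa_add f g))"
  unfolding fa_support_def fa_add_def
  by (rule finite_subset[of _ "{w. f w \<noteq> 0} \<union> {w. g w \<noteq> 0}"]) auto

lemma finite_fa_support_sub [simp]:
  "finite (fa_support f) \<Longrightarrow> finite (fa_support g) \<Longrightarrow> finite (fa_support (fa_sub f g))"
  unfolding fa_support_def fa_sub_def
  by (rule finite_subset[of _ "{w. f w \<noteq> 0} \<union> {w. g w \<noteq> 0}"]) auto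

lemma finite_fa_support_scale [simp]:
  "finite (fa_support f) \<Longrightarrow> finite (fa_support (fa_scale c f))"
  unfolding fa_support_def fa_scale_def by (rule finite_subset[of _ "{w. f w \<noteq> 0}"]) auto

lemma fa_eval_zero [simp]: "fa_eval \<chi> fa_zero = 0"
  by (simp add: fa_eval_def fa_zero_def)

lemma fa_eval_wd [simp]: "fa_eval \<chi> (wd u) = prod_list (map \<chi> u)"
  by (subst fa_eval_eq_sum[of "{u}"]) (auto simp: wd_def fa_support_def)

lemma fa_eval_add [simp]:
  assumes "finite (fa_support f)" and "finite (fa_support g)"
  shows "fa_eval \<chi> (fa_add f g) = fa_eval \<chi> f + fa_eval \<chi> g"
proof -
  let ?S = "fa_support f \<union> fa_support g"
  have S: "finite ?S" using assms by simp
  have "fa_eval \<chi> (fa_add f g) = (\<Sum>w\<in>?S. fa_add f g w * prod_list (map \<chi> w))"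
    by (rule fa_eval_eq_sum[OF S]) (auto simp: fa_support_def fa_add_def)
  moreover have "fa_eval \<chi> f = (\<Sum>w\<in>?S. f w * prod_list (map \<chi> w))"
    and "fa_eval \<chi> g = (\<Sum>w\<in>?S. g w * prod_list (map \<chi> w))"
    by (rule fa_eval_eq_sum[OF S], blast)+
  ultimately show ?thesis by (simp add: fa_add_def sum.distrib algebra_simps)
qed

lemma fa_eval_sub [simp]:
  assumes "finite (fa_support f)" and "finite (fa_support g)"
  shows "fa_eval \<chi> (fa_sub f g) = fa_eval \<chi> f - fa_eval \<chi> g"
proof -
  let ?S = "fa_support f \<union> fa_support g"
  have S: "finite ?S" using assms by simp
  have "fa_eval \<chi> (fa_sub f g) = (\<Sum>w\<in>?S. fa_sub f g w * prod_list (map \<chi> w))"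
    by (rule fa_eval_eq_sum[OF S]) (auto simp: fa_support_def fa_sub_def)
  moreover have "fa_eval \<chi> f = (\<Sum>w\<in>?S. f w * prod_list (map \<chi> w))"
    and "fa_eval \<chi> g = (\<Sum>w\<in>?S. g w * prod_list (map \<chi> w))"
    by (rule fa_eval_eq_sum[OF S], blast)+
  ultimately show ?thesis by (simp add: fa_sub_def sum_subtractf algebra_simps)
qed

lemma fa_eval_scale [simp]:
  assumes "finite (fa_support f)"
  shows "fa_eval \<chi> (fa_scale c f) = c * fa_eval \<chi> f"
proof -
  have "fa_eval \<chi> (fa_scale c f) = (\<Sum>w\<in>fa_support f. fa_scale c f w * prod_list (map \<chi> w))"
    by (rule fa_eval_eq_sum[OF assms]) (auto simp: fa_support_def fa_scale_def)
  then show ?thesis by (simp add: fa_eval_def fa_scale_def sum_distrib_left algebra_simps)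
qed

lemma fa_support_sandwich:
  "fa_support (fa_mul (fa_mul (wd u) r) (wd v)) \<subseteq> (\<lambda>x. u @ x @ v) ` fa_support (r :: 'k::field fa)"
proof
  fix w assume "w \<in> fa_support (fa_mul (fa_mul (wd u) r) (wd v))"
  then have "fa_mul (fa_mul (wd u) r) (wd v) w \<noteq> 0" by (simp add: fa_support_def)
  then have v: "drop (length w - length v) w = v"
    and "fa_mul (wd u) r (take (length w - length v) w) \<noteq> 0" (is "fa_mul _ _ ?t \<noteq> 0")
    by (auto simp: fa_mul_wd_right split: if_splits)
  then have u: "take (length u) ?t = u" and "r (drop (length u) ?t) \<noteq> 0"
    by (auto simp: fa_mul_wd_left split: if_splits)
  moreover have "w = u @ drop (length u) ?t @ v"
    using u v by (metis append_take_drop_id append_assoc)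
  ultimately have "w = u @ drop (length u) ?t @ v \<and> r (drop (length u) ?t) \<noteq> 0" by blast
  then show "w \<in> (\<lambda>x. u @ x @ v) ` fa_support r" by (auto simp: fa_support_def)
qed

lemma fa_eval_sandwich:
  assumes "finite (fa_support r)"
  shows "finite (fa_support (fa_mul (fa_mul (wd u) r) (wd v)))"
    and "fa_eval \<chi> (fa_mul (fa_mul (wd u) r) (wd v))
           = prod_list (map \<chi> u) * fa_eval \<chi> r * prod_list (map \<chi> v)"
proof -
  let ?f = "\<lambda>x. u @ x @ v"
  have S: "finite (?f ` fa_support r)" using assms by simp
  then show "finite (fa_support (fa_mul (fa_mul (wd u) r) (wd v)))"
    using fa_support_sandwich by (rule finite_subset[rotated])
  have "inj_on ?f (fa_support r)" by (auto simp: inj_on_def)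
  then have "fa_eval \<chi> (fa_mul (fa_mul (wd u) r) (wd v))
      = (\<Sum>x\<in>fa_support r. fa_mul (fa_mul (wd u) r) (wd v) (u @ x @ v) * prod_list (map \<chi> (u @ x @ v)))"
    by (simp add: fa_eval_eq_sum[OF S fa_support_sandwich] sum.reindex)
  also have "\<dots> = (\<Sum>x\<in>fa_support r. prod_list (map \<chi> u) * (r x * prod_list (map \<chi> x)) * prod_list (map \<chi> v))"
    by (simp add: fa_mul_wd_left fa_mul_wd_right algebra_simps)
  finally show "fa_eval \<chi> (fa_mul (fa_mul (wd u) r) (wd v))
           = prod_list (map \<chi> u) * fa_eval \<chi> r * prod_list (map \<chi> v)"
    by (simp add: fa_eval_def sum_distrib_left sum_distrib_right)
qed

lemma finite_fa_support_rels: "r \<in> rels q \<Longrightarrow> finite (fa_support r)"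
  by (auto simp: rels_def comm_def qcomm_def gel_def fa_mul_wd_wd)

lemma fa_eval_Oideal:
  assumes "\<And>r. r \<in> rels q \<Longrightarrow> fa_eval \<chi> r = 0" and "x \<in> Oideal q"
  shows "fa_eval \<chi> x = 0"
proof -
  from \<open>x \<in> Oideal q\<close> have "finite (fa_support x) \<and> fa_eval \<chi> x = 0"
    unfolding Oideal_def
  proof induction
    case (step x y c)
    then obtain u r v where x: "x = fa_mul (fa_mul (wd u) r) (wd v)" and r: "r \<in> rels q"
      by (auto simp: wprod_eq_wd)
    with step.IH show ?case
      by (simp add: x assms(1)[OF r] fa_eval_sandwich[OF finite_fa_support_rels[OF r]])
  qed simp
  then show ?thesis by simp
qed

text \<open>Sending \<open>W\<^sub>j\<close> to \<open>a\<close> for even \<open>j\<close> and to \<open>b\<close> for odd \<open>j\<close>, and all \<open>G\<close>, \<open>G\<^sup>~\<close> to 0,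
  kills every defining relation: all commutators vanish in the field, and both sides of the
  \<open>q\<close>-commutator relations pair \<open>W\<^sub>-\<^sub>k\<^sub>-\<^sub>1\<close> with \<open>W\<^sub>k\<^sub>+\<^sub>1\<close> (resp. \<open>W\<^sub>k\<^sub>+\<^sub>2\<close> with \<open>W\<^sub>-\<^sub>k\<close>), which have the same parity.\<close>
fun parity_character :: "'k::field \<Rightarrow> 'k \<Rightarrow> gen \<Rightarrow> 'k" where
  "parity_character a b (Wm k) = (if even k then a else b)"
| "parity_character a b (Wp k) = (if even k then b else a)"
| "parity_character a b (G k) = 0"
| "parity_character a b (Gt k) = 0"

lemma fa_eval_parity_character_rels:
  "r \<in> rels q \<Longrightarrow> fa_eval (parity_character a b) r = 0"
  by (auto simp: rels_def comm_def qcomm_def gel_def fa_mul_wd_wd)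

lemma one_W0_W1_independent_mod_Oideal:
  assumes "fa_add (fa_scale a fa_one) (fa_add (fa_scale b (gel (Wm 0))) (fa_scale c (gel (Wp 0))))
             \<in> Oideal q"
  shows "a = 0 \<and> b = 0 \<and> c = 0"
proof -
  have "a + b * \<alpha> + c * \<beta> = 0" for \<alpha> \<beta>
    using fa_eval_Oideal[OF fa_eval_parity_character_rels[of _ _ \<alpha> \<beta>] assms]
    by (simp add: fa_one_def gel_def add.assoc)
  from this[of 0 0] this[of 1 0] this[of 0 1] show ?thesis by simp
qed

lemma word_deg_Nil [simp]: "word_deg [] = 0"
  by (simp add: word_deg_def)

lemma word_deg_Cons [simp]: "word_deg (x # w) = gdeg x + word_deg w"
  by (simp add: word_deg_def)

lemma word_deg_append [simp]: "word_deg (u @ v) = word_deg u + word_deg v"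
  by (simp add: word_deg_def)

lemma gdeg_pos: "0 < gdeg x"
  by (cases x) auto

lemma word_deg_eq_0_iff [simp]: "word_deg w = 0 \<longleftrightarrow> w = []"
  by (cases w) (simp_all add: gdeg_pos)

lemma word_deg_le_1_iff: "word_deg w \<le> 1 \<longleftrightarrow> w \<in> {[], [Wm 0], [Wp 0]}"
proof (cases w)
  case (Cons x w')
  have "gdeg x \<le> 1 \<longleftrightarrow> x = Wm 0 \<or> x = Wp 0" by (cases x) auto
  with Cons gdeg_pos[of x] show ?thesis by auto
qed simp

lemma wprod_in_Od: "word_deg w \<le> d \<Longrightarrow> wprod w \<in> Od d"
  unfolding Od_def by (rule fspan_superset) blast

lemma gel_in_Od: "gdeg x \<le> d \<Longrightarrow> gel x \<in> Od d"
  using wprod_in_Od[of "[x]"] by simp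

lemma Od_mono:
  assumes "k \<le> m"
  shows "Od k \<subseteq> Od m"
proof -
  have "{wprod w | w. word_deg w \<le> k} \<subseteq> Od m" using assms by (auto intro: wprod_in_Od)
  then show ?thesis unfolding Od_def[of k] Od_def[of m] by (rule fspan_subset)
qed

lemma Od_mul:
  assumes "a \<in> Od k" and "b \<in> Od m"
  shows "fa_mul a b \<in> (Od (k + m) :: 'k::field fa set)"
proof -
  have "fa_mul x y \<in> (Od (k + m) :: 'k fa set)"
    if x: "x \<in> {wprod w | w. word_deg w \<le> k}" and y: "y \<in> {wprod w | w. word_deg w \<le> m}" for x y
  proof -
    obtain u v where "x = wprod u" "word_deg u \<le> k" "y = wprod v" "word_deg v \<le> m"
      using x y by blast
    then show ?thesis
      using wprod_in_Od[of "u @ v" "k + m"] by (simp add: wprod_eq_wd fa_mul_wd_wd)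
  qed
  then show ?thesis using assms unfolding Od_def by (rule fa_mul_fspan)
qed

lemma Od_1_eq: "Od 1 = (fspan {fa_one, gel (Wm 0), gel (Wp 0)} :: 'k::field fa set)"
proof -
  have "{wprod w | w. word_deg w \<le> 1} = (wprod ` {[], [Wm 0], [Wp 0]} :: 'k fa set)"
    unfolding word_deg_le_1_iff by blast
  then show ?thesis by (simp add: Od_def)
qed

lemma rels_subset_Oideal: "r \<in> rels q \<Longrightarrow> r \<in> Oideal q"
proof -
  assume "r \<in> rels q"
  moreover have "r = fa_mul (fa_mul (wprod []) r) (wprod [])" by simp
  ultimately show ?thesis unfolding Oideal_def by (blast intro: fspan_superset)
qed

lemma Oideal_scale: "x \<in> Oideal q \<Longrightarrow> fa_scale c x \<in> Oideal q"
  unfolding Oideal_def by (rule fspan_scale)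

lemma modI_mono: "A \<subseteq> B \<Longrightarrow> modI q A \<subseteq> modI q B"
  unfolding modI_def by blast

lemma fa_sub_self [simp]: "fa_sub x x = (fa_zero :: 'k::field fa)"
  by (rule ext) (simp add: fa_sub_def fa_zero_def)

lemma fa_zero_in_Oideal [simp]: "fa_zero \<in> Oideal q"
  unfolding Oideal_def by (rule fspan.zero)

lemma modI_fspan_subset:
  assumes "\<And>x. x \<in> A \<Longrightarrow> \<exists>s\<in>fspan B. fa_sub x s \<in> Oideal q"
  shows "modI q (fspan A) \<subseteq> modI q (fspan B)"
proof -
  have reduce: "\<exists>s\<in>fspan B. fa_sub x s \<in> Oideal q" if "x \<in> fspan A" for x
    using that
  proof induction
    case zero
    have "fa_sub fa_zero fa_zero \<in> Oideal q" by simp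
    then show ?case by (blast intro: fspan.zero)
  next
    case (step x y c)
    then obtain sx sy where "sx \<in> fspan B" "fa_sub x sx \<in> Oideal q"
      and "sy \<in> fspan B" "fa_sub y sy \<in> Oideal q"
      using assms by blast
    moreover have "fa_sub (fa_add (fa_scale c x) y) (fa_add (fa_scale c sx) sy)
        = fa_add (fa_scale c (fa_sub x sx)) (fa_sub y sy)"
      by (rule ext) (simp add: fa_sub_def fa_add_def fa_scale_def algebra_simps)
    ultimately have "fa_add (fa_scale c sx) sy \<in> fspan B"
      and "fa_sub (fa_add (fa_scale c x) y) (fa_add (fa_scale c sx) sy) \<in> Oideal q"
      unfolding Oideal_def by (simp_all add: fspan_add fspan_scale)
    then show ?case by blast
  qed
  show ?thesis
  proof
    fix y assume "y \<in> modI q (fspan A)"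
    then obtain x where "x \<in> fspan A" and yx: "fa_sub y x \<in> Oideal q" by (auto simp: modI_def)
    then obtain s where "s \<in> fspan B" and xs: "fa_sub x s \<in> Oideal q" using reduce by blast
    have "fa_sub y s = fa_add (fa_sub y x) (fa_sub x s)"
      by (rule ext) (simp add: fa_sub_def fa_add_def)
    with yx xs have "fa_sub y s \<in> Oideal q" unfolding Oideal_def by (simp add: fspan_add)
    with \<open>s \<in> fspan B\<close> show "y \<in> modI q (fspan B)" by (auto simp: modI_def)
  qed
qed

lemma q_plus_inverse_nonzero:
  fixes q :: "'k::field"
  assumes "q \<noteq> 0" and "q ^ 4 \<noteq> 1"
  shows "q + inverse q \<noteq> 0"
proof
  assume "q + inverse q = 0"
  then have "q * q = -1" using assms(1) by (simp add: field_simps eq_neg_iff_add_eq_0)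
  then have "q ^ 4 = 1" by (simp add: power4_eq_xxxx)
  with assms(2) show False by simp
qed

lemma rho_nonzero:
  fixes q :: "'k::field"
  assumes "q \<noteq> 0" and "q ^ 4 \<noteq> 1"
  shows "rho q \<noteq> 0"
proof
  assume "rho q = 0"
  then have "q\<^sup>2 * q\<^sup>2 = 1" using assms(1) by (simp add: rho_def field_simps)
  then have "q ^ 4 = 1" by (simp flip: power_add)
  with assms(2) show False by simp
qed

lemma G_congruent:
  assumes "q + inverse q \<noteq> 0"
  shows "fa_sub (gel (G k))
           (fa_sub (gel (Gt k)) (fa_scale (q + inverse q) (comm (gel (Wm 0)) (gel (Wp k)))))
         \<in> Oideal q"
proof -
  let ?r = "fa_sub (comm (gel (Wm 0)) (gel (Wp k)))
              (fa_scale (inverse (q + inverse q)) (fa_sub (gel (Gt k)) (gel (G k))))"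
  have "?r \<in> Oideal q" by (rule rels_subset_Oideal) (unfold rels_def, blast)
  moreover have "fa_sub (gel (G k))
           (fa_sub (gel (Gt k)) (fa_scale (q + inverse q) (comm (gel (Wm 0)) (gel (Wp k)))))
      = fa_scale (q + inverse q) ?r"
    using assms by (intro ext) (simp add: fa_sub_def fa_scale_def field_simps)
  ultimately show ?thesis by (simp add: Oideal_scale)
qed

lemma Wm_Suc_congruent:
  assumes "rho q \<noteq> 0"
  shows "fa_sub (gel (Wm (Suc k)))
           (fa_add (gel (Wp k)) (fa_scale (inverse (rho q)) (qcomm q (gel (Wm 0)) (gel (G k)))))
         \<in> Oideal q"
proof -
  let ?r = "fa_sub (qcomm q (gel (Wm 0)) (gel (G k)))
              (fa_sub (fa_scale (rho q) (gel (Wm (Suc k)))) (fa_scale (rho q) (gel (Wp k))))"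
  have "?r \<in> Oideal q" by (rule rels_subset_Oideal) (unfold rels_def, blast)
  moreover have "fa_sub (gel (Wm (Suc k)))
           (fa_add (gel (Wp k)) (fa_scale (inverse (rho q)) (qcomm q (gel (Wm 0)) (gel (G k)))))
      = fa_scale (- inverse (rho q)) ?r"
    using assms by (intro ext) (simp add: fa_sub_def fa_add_def fa_scale_def field_simps)
  ultimately show ?thesis by (simp add: Oideal_scale)
qed

lemma Wp_Suc_congruent:
  assumes "rho q \<noteq> 0"
  shows "fa_sub (gel (Wp (Suc k)))
           (fa_add (gel (Wm k)) (fa_scale (inverse (rho q)) (qcomm q (gel (G k)) (gel (Wp 0)))))
         \<in> Oideal q"
proof -
  let ?r = "fa_sub (qcomm q (gel (G k)) (gel (Wp 0)))
              (fa_sub (fa_scale (rho q) (gel (Wp (Suc k)))) (fa_scale (rho q) (gel (Wm k))))"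
  have "?r \<in> Oideal q" by (rule rels_subset_Oideal) (unfold rels_def, blast)
  moreover have "fa_sub (gel (Wp (Suc k)))
           (fa_add (gel (Wm k)) (fa_scale (inverse (rho q)) (qcomm q (gel (G k)) (gel (Wp 0)))))
      = fa_scale (- inverse (rho q)) ?r"
    using assms by (intro ext) (simp add: fa_sub_def fa_add_def fa_scale_def field_simps)
  ultimately show ?thesis by (simp add: Oideal_scale)
qed

definition Od_decomp :: "nat \<Rightarrow> 'k::field fa set" where
  "Od_decomp d = fspan (Ed_gens d \<union> Od (d - 1) \<union> prod_gens d)"

lemma Od_decomp_add: "x \<in> Od_decomp d \<Longrightarrow> y \<in> Od_decomp d \<Longrightarrow> fa_add x y \<in> Od_decomp d"
  unfolding Od_decomp_def by (rule fspan_add)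

lemma Od_decomp_sub: "x \<in> Od_decomp d \<Longrightarrow> y \<in> Od_decomp d \<Longrightarrow> fa_sub x y \<in> Od_decomp d"
  unfolding Od_decomp_def by (rule fspan_sub)

lemma Od_decomp_scale: "x \<in> Od_decomp d \<Longrightarrow> fa_scale c x \<in> Od_decomp d"
  unfolding Od_decomp_def by (rule fspan_scale)

lemma lower_in_Od_decomp: "x \<in> Od (d - 1) \<Longrightarrow> x \<in> Od_decomp d"
  unfolding Od_decomp_def by (blast intro: fspan_superset)

lemma gel_lower_in_Od_decomp: "gdeg x < d \<Longrightarrow> gel x \<in> Od_decomp d"
  by (intro lower_in_Od_decomp gel_in_Od) simp

lemma Gt_in_Od_decomp: "gdeg (Gt k) = d \<Longrightarrow> gel (Gt k) \<in> Od_decomp d"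
  unfolding Od_decomp_def Ed_gens_def by (intro fspan_superset) auto

lemma product_in_Od_decomp:
  "1 \<le> k \<Longrightarrow> k < d \<Longrightarrow> a \<in> Od k \<Longrightarrow> b \<in> Od (d - k) \<Longrightarrow> fa_mul a b \<in> Od_decomp d"
  unfolding Od_decomp_def prod_gens_def by (intro fspan_superset) auto

lemma gel_product_in_Od_decomp:
  "gdeg x + gdeg y = d \<Longrightarrow> fa_mul (gel x) (gel y) \<in> Od_decomp d"
  using gdeg_pos[of x] gdeg_pos[of y]
  by (intro product_in_Od_decomp[of "gdeg x"] gel_in_Od) auto

lemma comm_in_Od_decomp: "gdeg x + gdeg y = d \<Longrightarrow> comm (gel x) (gel y) \<in> Od_decomp d"
  unfolding comm_def by (intro Od_decomp_sub gel_product_in_Od_decomp) simp_all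

lemma qcomm_in_Od_decomp: "gdeg x + gdeg y = d \<Longrightarrow> qcomm q (gel x) (gel y) \<in> Od_decomp d"
  unfolding qcomm_def by (intro Od_decomp_sub Od_decomp_scale gel_product_in_Od_decomp) simp_all

lemma gel_congruent_Od_decomp:
  assumes "q + inverse q \<noteq> 0" and "rho q \<noteq> 0" and "gdeg x = d" and "2 \<le> d"
  shows "\<exists>s\<in>Od_decomp d. fa_sub (gel x) s \<in> Oideal q"
proof (cases x)
  case (Gt k)
  with assms(3) have "gel x \<in> Od_decomp d" by (simp add: Gt_in_Od_decomp)
  then show ?thesis by force
next
  case (G k)
  with assms have "fa_sub (gel (Gt k)) (fa_scale (q + inverse q) (comm (gel (Wm 0)) (gel (Wp k))))
      \<in> Od_decomp d"
    by (intro Od_decomp_sub Od_decomp_scale Gt_in_Od_decomp comm_in_Od_decomp) auto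
  with G_congruent[OF assms(1)] G show ?thesis by blast
next
  case (Wm k)
  with assms obtain j where j: "k = Suc j" by (cases k) auto
  with Wm assms have "fa_add (gel (Wp j)) (fa_scale (inverse (rho q)) (qcomm q (gel (Wm 0)) (gel (G j))))
      \<in> Od_decomp d"
    by (intro Od_decomp_add Od_decomp_scale gel_lower_in_Od_decomp qcomm_in_Od_decomp) auto
  with Wm_Suc_congruent[OF assms(2)] Wm j show ?thesis by blast
next
  case (Wp k)
  with assms obtain j where j: "k = Suc j" by (cases k) auto
  with Wp assms have "fa_add (gel (Wm j)) (fa_scale (inverse (rho q)) (qcomm q (gel (G j)) (gel (Wp 0))))
      \<in> Od_decomp d"
    by (intro Od_decomp_add Od_decomp_scale gel_lower_in_Od_decomp qcomm_in_Od_decomp) auto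
  with Wp_Suc_congruent[OF assms(2)] Wp j show ?thesis by blast
qed

lemma wprod_congruent_Od_decomp:
  assumes "q + inverse q \<noteq> 0" and "rho q \<noteq> 0" and "word_deg w \<le> d" and "2 \<le> d"
  shows "\<exists>s\<in>Od_decomp d. fa_sub (wprod w) s \<in> Oideal q"
proof -
  consider "word_deg w < d" | x where "w = [x]" "gdeg x = d"
    | x w' where "w = x # w'" "w' \<noteq> []" "word_deg w = d"
    using assms(3,4) by (cases w; cases "tl w") fastforce+
  then show ?thesis
  proof cases
    case 1
    then have "wprod w \<in> Od_decomp d" by (intro lower_in_Od_decomp wprod_in_Od) simp
    then show ?thesis by force
  next
    case (2 x)
    with gel_congruent_Od_decomp[OF assms(1,2) _ assms(4)] show ?thesis by simp
  next
    case (3 x w')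
    then have "0 < word_deg w'" by (metis word_deg_eq_0_iff neq0_conv)
    with 3 have "fa_mul (gel x) (wprod w') \<in> Od_decomp d"
      using gdeg_pos[of x]
      by (intro product_in_Od_decomp[of "gdeg x"] gel_in_Od wprod_in_Od) auto
    with 3 show ?thesis by (force simp: wprod_Cons)
  qed
qed

lemma Od_decomp_subset_Od:
  assumes "0 < d"
  shows "Od_decomp d \<subseteq> Od d"
proof -
  have "Ed_gens d \<subseteq> Od d"
    using assms by (auto simp: Ed_gens_def intro!: gel_in_Od elim!: evenE)
  moreover have "Od (d - 1) \<subseteq> Od d" by (rule Od_mono) simp
  moreover have "prod_gens d \<subseteq> Od d"
    by (auto simp: prod_gens_def dest: Od_mul)
  ultimately show ?thesis
    unfolding Od_decomp_def Od_def[of d] by (intro fspan_subset) simp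
qed

theorem lemma7p4:
  fixes q :: "'k::field"
  assumes "q \<noteq> 0" and "\<forall>n>0. q ^ n \<noteq> 1"
  shows "modI q (Od 1) = modI q (fspan {fa_one, gel (Wm 0), gel (Wp 0)})
       \<and> (\<forall>a b c. fa_add (fa_scale a fa_one)
                     (fa_add (fa_scale b (gel (Wm 0))) (fa_scale c (gel (Wp 0)))) \<in> Oideal q
              \<longrightarrow> a = 0 \<and> b = 0 \<and> c = 0)
       \<and> (\<forall>d\<ge>2. modI q (Od d) =
                 modI q (fspan (Ed_gens d \<union> Od (d - 1) \<union> prod_gens d)))"
proof (intro conjI allI impI)
  show "modI q (Od 1) = modI q (fspan {fa_one, gel (Wm 0), gel (Wp 0)})"
    by (simp only: Od_1_eq)
next
  fix a b c
  assume "fa_add (fa_scale a fa_one) (fa_add (fa_scale b (gel (Wm 0))) (fa_scale c (gel (Wp 0))))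
          \<in> Oideal q"
  then show "a = 0" "b = 0" "c = 0" by (simp_all add: one_W0_W1_independent_mod_Oideal)
next
  fix d :: nat
  assume "2 \<le> d"
  have "q ^ 4 \<noteq> 1" using assms(2) by simp
  with assms(1) have "q + inverse q \<noteq> 0" and "rho q \<noteq> 0"
    by (simp_all add: q_plus_inverse_nonzero rho_nonzero)
  with \<open>2 \<le> d\<close> have "modI q (Od d) \<subseteq> modI q (Od_decomp d)"
    unfolding Od_def[of d] Od_decomp_def
    by (intro modI_fspan_subset) (blast intro: wprod_congruent_Od_decomp[unfolded Od_decomp_def])
  moreover have "modI q (Od_decomp d) \<subseteq> modI q (Od d)"
    using \<open>2 \<le> d\<close> by (intro modI_mono Od_decomp_subset_Od) simp
  ultimately show "modI q (Od d) = modI q (fspan (Ed_gens d \<union> Od (d - 1) \<union> prod_gens d))"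
    unfolding Od_decomp_def by (rule antisym)
qed

end
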